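(* $\displaystyle\mathfrak G^Q_{s_1s_2\cdots s_{n-1}}(z|\eta)=\sum_{j=0}^{n-1}(-1)^j(1-\eta_1)^jF^{(n-1)}_j.$
   Context: Fix $n\ge2$. With the convention $Q_n:=0$, for $0\le m\le i\le n$ put $F^{(i)}_m=\sum_{J\subset\{1,\dots,i\},|J|=m}\prod_{j\in J,\,j+1\notin J}(1-Q_j)\prod_{j\in J}z_j$. Let $s_i^{(\eta)}$ swap $\eta_i,\eta_{i+1}$, $x\ominus y=(x-y)/(1-y)$, and $D^Q_i=1+\frac{s_i^{(\eta)}-1}{\eta_{i+1}\ominus\eta_i}$ ($1\le i\le n-1$) acting on $\mathbb{Z}[Q_1,\dots,Q_{n-1}][z_1,\dots,z_n,\eta_1,\dots,\eta_n]$ (fixing $z,Q$). Let $\psi_i=\sum_{j=0}^i(-1)^j(1-\eta_{n-i})^jF^{(i)}_j$. The quantum double Grothendieck polynomials $\mathfrak G^Q_w(z|\eta)$, $w\in S_n$, are the unique family with $\mathfrak G^Q_{w_\circ}=\prod_{i=1}^{n-1}\psi_i$ and $D^Q_i\mathfrak G^Q_w=\mathfrak G^Q_{s_iw}$ if $s_iw<w$, $=\mathfrak G^Q_w$ if $s_iw>w$. *)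

theory Defs
  imports "HOL-Library.Poly_Mapping" "HOL-Combinatorics.Permutations"
begin

text \<open>Variables of the polynomial ring Z[Q_1,...][z_1,...,eta_1,...].\<close>
datatype var = Qv nat | Zv nat | Ev nat

type_synonym mpoly = "(var \<Rightarrow>\<^sub>0 nat) \<Rightarrow>\<^sub>0 int"

definition X :: "var \<Rightarrow> mpoly" where
  "X v = Poly_Mapping.single (Poly_Mapping.single v 1) 1"

abbreviation z :: "nat \<Rightarrow> mpoly" where "z j \<equiv> X (Zv j)"
abbreviation eta :: "nat \<Rightarrow> mpoly" where "eta j \<equiv> X (Ev j)"

text \<open>Quantum parameter with the convention Q_n = 0.\<close>
definition Qp :: "nat \<Rightarrow> nat \<Rightarrow> mpoly" where
  "Qp n j = (if j = n then 0 else X (Qv j))"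

definition rename :: "(var \<Rightarrow> var) \<Rightarrow> mpoly \<Rightarrow> mpoly" where
  "rename \<sigma> p = Poly_Mapping.map_key (Poly_Mapping.map_key \<sigma>) p"

definition s_eta :: "nat \<Rightarrow> mpoly \<Rightarrow> mpoly" where
  "s_eta i p = rename (transpose (Ev i) (Ev (Suc i))) p"

definition pdiv :: "mpoly \<Rightarrow> mpoly \<Rightarrow> mpoly" where
  "pdiv p q = (THE r. p = q * r)"

text \<open>D^Q_i = 1 + (s_i - 1)/(eta_(i+1) ominus eta_i), where x ominus y = (x-y)/(1-y),
  so 1/(eta_(i+1) ominus eta_i) = (1 - eta_i)/(eta_(i+1) - eta_i).\<close>
definition DQ :: "nat \<Rightarrow> mpoly \<Rightarrow> mpoly" where
  "DQ i f = f + pdiv ((1 - eta i) * (s_eta i f - f)) (eta (Suc i) - eta i)"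

definition F :: "nat \<Rightarrow> nat \<Rightarrow> nat \<Rightarrow> mpoly" where
  "F n i m = (\<Sum>J\<in>{J. J \<subseteq> {1..i} \<and> card J = m}.
      (\<Prod>j\<in>{j\<in>J. Suc j \<notin> J}. 1 - Qp n j) * (\<Prod>j\<in>J. z j))"

definition psi :: "nat \<Rightarrow> nat \<Rightarrow> mpoly" where
  "psi n i = (\<Sum>j=0..i. (-1)^j * (1 - eta (n - i))^j * F n i j)"

text \<open>Permutations of {1..n} as functions nat => nat; s_i as the transposition (i i+1);
  products are compositions.\<close>
definition sref :: "nat \<Rightarrow> nat \<Rightarrow> nat" where
  "sref i = transpose i (Suc i)"

definition inv_len :: "nat \<Rightarrow> (nat \<Rightarrow> nat) \<Rightarrow> nat" where
  "inv_len n w = card {(a, b). a \<in> {1..n} \<and> b \<in> {1..n} \<and> a < b \<and> w a > w b}"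

definition w0 :: "nat \<Rightarrow> nat \<Rightarrow> nat" where
  "w0 n = (\<lambda>i. if i \<in> {1..n} then n + 1 - i else i)"

definition coxeter :: "nat \<Rightarrow> nat \<Rightarrow> nat" where
  "coxeter n = foldr (\<lambda>i w. sref i \<circ> w) [1..<n] id"

definition is_QDG :: "nat \<Rightarrow> ((nat \<Rightarrow> nat) \<Rightarrow> mpoly) \<Rightarrow> bool" where
  "is_QDG n G \<longleftrightarrow>
     G (w0 n) = (\<Prod>i=1..n-1. psi n i) \<and>
     (\<forall>w i. (w permutes {1..n}) \<and> 1 \<le> i \<and> i \<le> n - 1 \<longrightarrow>
        DQ i (G w) = (if inv_len n (sref i \<circ> w) < inv_len n w then G (sref i \<circ> w) else G w))"

end

theory Submission
  imports Defs
begin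

(* With eta_bar j = 1 - eta j the operator D^Q_j becomes the isobaric divided difference
   f \<mapsto> (eta_bar j * s_j f - eta_bar (j+1) * f) / (eta_bar j - eta_bar (j+1)), which is
   linear over s_j-invariant polynomials.  The Coxeter element is reached from w0 by the
   reduced path that, for m = n-1, ..., 2 in turn, multiplies on the left by s_m, ..., s_(n-1);
   every step lowers the length, so G is transported along the path by the D^Q_j.
   At the start of the row of m the polynomial is psi_(n-m) * psi_(n-m+1) * ... * psi_(n-1).
   All factors but the first are invariant under s_m, ..., s_(n-1), and psi_(n-m) is a
   polynomial in eta_bar m with invariant coefficients.  D_(j-1) ... D_m sends eta_bar m ^ k
   to +-(eta_bar m ... eta_bar j) times the complete homogeneous polynomial of degree
   k-1-(j-m) in eta_bar m, ..., eta_bar j; at the end of the row (j = n) this vanishes for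
   1 <= k <= n-m, so the row just deletes the factor psi_(n-m).  After the last row only
   psi_(n-1) is left. *)

section \<open>Renaming variables\<close>

lemma poly_mapping_single_induct [case_names zero add_single]:
  assumes "P 0" and "\<And>f a b. P f \<Longrightarrow> P (f + Poly_Mapping.single a b)"
  shows "P f"
proof (induction f rule: Poly_Mapping.update_induct)
  case const
  show ?case using assms(1) .
next
  case (update f a b)
  have "Poly_Mapping.update a b f = f + Poly_Mapping.single a b"
    using update(1)
    by (intro poly_mapping_eqI)
      (auto simp: Poly_Mapping.lookup_update lookup_add lookup_single in_keys_iff when_def)
  then show ?case using assms(2) update(3) by simp
qed

context
  fixes \<sigma> :: "var \<Rightarrow> var"
  assumes involutive: "\<And>x. \<sigma> (\<sigma> x) = x"
begin

lemma inj_involutive: "inj \<sigma>"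
  by (metis injI involutive)

lemma map_key_map_key_involutive: "Poly_Mapping.map_key \<sigma> (Poly_Mapping.map_key \<sigma> m) = m"
proof -
  have "\<sigma> \<circ> \<sigma> = (\<lambda>x. x)" using involutive by (simp add: fun_eq_iff)
  then show ?thesis
    by (simp add: map_key_compose[OF inj_involutive inj_involutive] map_key_id)
qed

lemma inj_map_key_involutive: "inj (Poly_Mapping.map_key \<sigma>)"
  by (metis injI map_key_map_key_involutive)

lemma rename_add: "rename \<sigma> (p + q) = rename \<sigma> p + rename \<sigma> q"
  unfolding rename_def by (rule map_key_plus[OF inj_map_key_involutive])

lemma rename_zero: "rename \<sigma> 0 = 0"
  unfolding rename_def by (rule map_key_zero[OF inj_map_key_involutive])

lemma rename_single:
  "rename \<sigma> (Poly_Mapping.single m c) = Poly_Mapping.single (Poly_Mapping.map_key \<sigma> m) c"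
  using map_key_single[OF inj_map_key_involutive, of "Poly_Mapping.map_key \<sigma> m" c]
  by (simp add: rename_def map_key_map_key_involutive)

lemma rename_mult: "rename \<sigma> (p * q) = rename \<sigma> p * rename \<sigma> q"
proof (induction p rule: poly_mapping_single_induct)
  case zero
  show ?case by (simp add: rename_zero)
next
  case (add_single f a b)
  have "rename \<sigma> (Poly_Mapping.single a b * q)
      = rename \<sigma> (Poly_Mapping.single a b) * rename \<sigma> q"
  proof (induction q rule: poly_mapping_single_induct)
    case zero
    show ?case by (simp add: rename_zero)
  next
    case (add_single g c d)
    then show ?case
      by (simp add: distrib_left rename_add rename_single mult_single
          map_key_plus[OF inj_involutive])
  qed
  with add_single show ?case by (simp add: distrib_right rename_add)
qed

lemma rename_one: "rename \<sigma> 1 = 1"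
  using rename_single[of 0 1] by (simp add: map_key_zero[OF inj_involutive])

lemma rename_uminus: "rename \<sigma> (- p) = - rename \<sigma> p"
  using rename_add[of p "- p"] by (simp add: rename_zero eq_neg_iff_add_eq_0 add.commute)

lemma rename_diff: "rename \<sigma> (p - q) = rename \<sigma> p - rename \<sigma> q"
  using rename_add[of p "- q"] by (simp add: rename_uminus)

lemma rename_sum: "rename \<sigma> (sum f A) = (\<Sum>x\<in>A. rename \<sigma> (f x))"
  by (induction A rule: infinite_finite_induct) (simp_all add: rename_zero rename_add)

lemma rename_prod: "rename \<sigma> (prod f A) = (\<Prod>x\<in>A. rename \<sigma> (f x))"
  by (induction A rule: infinite_finite_induct) (simp_all add: rename_one rename_mult)

lemma rename_power: "rename \<sigma> (p ^ k) = rename \<sigma> p ^ k"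
  by (induction k) (simp_all add: rename_one rename_mult)

lemma rename_X: "rename \<sigma> (X v) = X (\<sigma> v)"
  using map_key_single[OF inj_involutive, of "\<sigma> v" "1::nat"]
  by (simp add: X_def rename_single involutive)

end

lemma s_eta_hom:
  "s_eta i (p + q) = s_eta i p + s_eta i q"
  "s_eta i 0 = 0"
  "s_eta i (p * q) = s_eta i p * s_eta i q"
  "s_eta i 1 = 1"
  "s_eta i (- p) = - s_eta i p"
  "s_eta i (p - q) = s_eta i p - s_eta i q"
  "s_eta i (sum f A) = (\<Sum>x\<in>A. s_eta i (f x))"
  "s_eta i (prod f A) = (\<Prod>x\<in>A. s_eta i (f x))"
  "s_eta i (p ^ k) = s_eta i p ^ k"
  "s_eta i (X v) = X (transpose (Ev i) (Ev (Suc i)) v)"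
  unfolding s_eta_def
  by (rule rename_add rename_zero rename_mult rename_one rename_uminus rename_diff
      rename_sum rename_prod rename_power rename_X, rule transpose_involutory)+

definition eta_bar :: "nat \<Rightarrow> mpoly" where
  "eta_bar j = 1 - eta j"

lemma s_eta_eta_bar:
  "s_eta i (eta_bar i) = eta_bar (Suc i)"
  "s_eta i (eta_bar (Suc i)) = eta_bar i"
  "l \<noteq> i \<Longrightarrow> l \<noteq> Suc i \<Longrightarrow> s_eta i (eta_bar l) = eta_bar l"
  by (simp_all add: eta_bar_def s_eta_hom)

lemma s_eta_Qp: "s_eta i (Qp n l) = Qp n l"
  by (simp add: Qp_def s_eta_hom)

lemma s_eta_F: "s_eta i (F n a b) = F n a b"
  unfolding F_def by (simp add: s_eta_hom s_eta_Qp)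

lemma s_eta_psi: "n - a \<noteq> i \<Longrightarrow> n - a \<noteq> Suc i \<Longrightarrow> s_eta i (psi n a) = psi n a"
  unfolding psi_def by (simp add: s_eta_hom s_eta_F)


section \<open>The operators D^Q_j\<close>

fun var_index :: "var \<Rightarrow> nat" where
  "var_index (Qv k) = 3 * k"
| "var_index (Zv k) = 3 * k + 1"
| "var_index (Ev k) = 3 * k + 2"

lemma inj_var_index: "inj var_index"
proof (rule injI)
  fix a b assume "var_index a = var_index b"
  then show "a = b" by (cases a; cases b; simp; presburger)
qed

(* Any linear order on the variables makes mpoly an integral domain, so that the exact
   quotient in the definition of DQ is unique. *)
instantiation var :: linorder
begin

definition less_eq_var_def: "a \<le> b \<longleftrightarrow> var_index a \<le> var_index b"
definition less_var_def: "a < b \<longleftrightarrow> var_index a < var_index b"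

instance
  by standard (auto simp: less_eq_var_def less_var_def dest: injD[OF inj_var_index])

end

lemma X_eq_iff: "X a = X b \<longleftrightarrow> a = b"
proof
  assume "X a = X b"
  then have "Poly_Mapping.keys (Poly_Mapping.single a (1::nat))
      = Poly_Mapping.keys (Poly_Mapping.single b (1::nat))"
    by (simp add: X_def frag_of_eq)
  then show "a = b" by simp
qed simp

(* D^Q_j f = g, witnessed by an exact division
   (eta_bar j - eta_bar (Suc j) = eta (Suc j) - eta j). *)
definition DQ_maps :: "nat \<Rightarrow> mpoly \<Rightarrow> mpoly \<Rightarrow> bool" where
  "DQ_maps j f g \<longleftrightarrow>
     eta_bar j * (s_eta j f - f) = (eta_bar j - eta_bar (Suc j)) * (g - f)"

lemma DQ_eqI:
  assumes "DQ_maps j f g"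
  shows "DQ j f = g"
proof -
  have nonzero: "eta (Suc j) - eta j \<noteq> 0"
    by (simp add: X_eq_iff)
  have "(1 - eta j) * (s_eta j f - f) = (eta (Suc j) - eta j) * (g - f)"
    using assms by (simp add: DQ_maps_def eta_bar_def)
  then have "pdiv ((1 - eta j) * (s_eta j f - f)) (eta (Suc j) - eta j) = g - f"
    unfolding pdiv_def using nonzero by (intro the_equality) auto
  then show ?thesis by (simp add: DQ_def)
qed

lemma DQ_maps_sum:
  assumes "\<And>k. k \<in> A \<Longrightarrow> DQ_maps j (f k) (g k)"
  shows "DQ_maps j (\<Sum>k\<in>A. f k) (\<Sum>k\<in>A. g k)"
  using assms
  by (simp add: DQ_maps_def s_eta_hom sum_distrib_left sum_subtractf[symmetric])

lemma DQ_maps_mult_invariant: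
  assumes "s_eta j c = c" and "DQ_maps j f g"
  shows "DQ_maps j (c * f) (c * g)"
proof -
  have "eta_bar j * (s_eta j (c * f) - c * f) = c * (eta_bar j * (s_eta j f - f))"
    using assms(1) by (simp add: s_eta_hom algebra_simps)
  also have "\<dots> = c * ((eta_bar j - eta_bar (Suc j)) * (g - f))"
    using assms(2) by (simp add: DQ_maps_def)
  also have "\<dots> = (eta_bar j - eta_bar (Suc j)) * (c * g - c * f)"
    by (simp add: algebra_simps)
  finally show ?thesis by (simp add: DQ_maps_def)
qed


section \<open>Complete homogeneous polynomials and iterated D^Q\<close>

fun hcomplete :: "nat \<Rightarrow> 'a::comm_ring_1 list \<Rightarrow> 'a" where
  "hcomplete 0 xs = 1"
| "hcomplete (Suc r) [] = 0"
| "hcomplete (Suc r) (x # xs) = x * hcomplete r (x # xs) + hcomplete (Suc r) xs"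

lemma hcomplete_singleton: "hcomplete r [x] = x ^ r"
  by (induction r) auto

lemma hcomplete_Cons_diff:
  "hcomplete (Suc r) (b # xs) - hcomplete (Suc r) (a # xs) = (b - a) * hcomplete r (b # a # xs)"
proof (induction r)
  case 0
  show ?case by simp
next
  case (Suc r)
  have IH: "hcomplete (Suc r) (b # xs) = hcomplete (Suc r) (a # xs) + (b - a) * hcomplete r (b # a # xs)"
    using Suc.IH by (simp add: algebra_simps)
  have "hcomplete (Suc (Suc r)) (b # xs) - hcomplete (Suc (Suc r)) (a # xs)
      = b * hcomplete (Suc r) (b # xs) - a * hcomplete (Suc r) (a # xs)"
    by simp
  also have "\<dots> = (b - a) * (b * hcomplete r (b # a # xs) + hcomplete (Suc r) (a # xs))"
    unfolding IH by (simp add: algebra_simps)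
  also have "\<dots> = (b - a) * hcomplete (Suc r) (b # a # xs)"
    by simp
  finally show ?case .
qed

lemma s_eta_hcomplete: "s_eta i (hcomplete r xs) = hcomplete r (map (s_eta i) xs)"
  by (induction r xs rule: hcomplete.induct) (simp_all add: s_eta_hom)

(* The value of D_(j-1) \<circ> ... \<circ> D_m on eta_bar m ^ k. *)
definition DQ_power :: "nat \<Rightarrow> nat \<Rightarrow> nat \<Rightarrow> mpoly" where
  "DQ_power m j k =
    (if k = 0 then 1
     else if j - m < k then
       (-1) ^ (j - m) * (\<Prod>l=m..j. eta_bar l) *
       hcomplete (k - Suc (j - m)) (map eta_bar (rev [m..<Suc j]))
     else 0)"

lemma DQ_power_0: "DQ_power m j 0 = 1"
  by (simp add: DQ_power_def)

lemma DQ_power_diag: "DQ_power m m k = eta_bar m ^ k"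
  by (cases k) (simp_all add: DQ_power_def hcomplete_singleton)

lemma DQ_power_vanish: "0 < k \<Longrightarrow> k \<le> j - m \<Longrightarrow> DQ_power m j k = 0"
  by (simp add: DQ_power_def)

lemma DQ_maps_DQ_power:
  assumes "m \<le> j"
  shows "DQ_maps j (DQ_power m j k) (DQ_power m (Suc j) k)"
proof (cases "k \<noteq> 0 \<and> j - m < k")
  case False
  then have "DQ_power m j k = DQ_power m (Suc j) k" "s_eta j (DQ_power m j k) = DQ_power m j k"
    by (auto simp: DQ_power_def s_eta_hom)
  then show ?thesis by (simp add: DQ_maps_def)
next
  case True
  define a where "a = eta_bar j"
  define b where "b = eta_bar (Suc j)"
  define L where "L = map eta_bar (rev [m..<j])"
  define c where "c = (-1) ^ (j - m) * (\<Prod>l\<in>{m..<j}. eta_bar l)"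
  define r where "r = k - Suc (j - m)"
  have prod_eq: "(\<Prod>l=m..j. eta_bar l) = (\<Prod>l\<in>{m..<j}. eta_bar l) * eta_bar j"
    using assms by (simp add: atLeastLessThanSuc_atLeastAtMost[symmetric] prod.atLeastLessThan_Suc)
  have R: "DQ_power m j k = c * a * hcomplete r (a # L)"
    using True assms
    by (simp add: DQ_power_def a_def c_def r_def L_def prod_eq mult.assoc)
  have "s_eta j c = c"
    by (simp add: c_def s_eta_hom s_eta_eta_bar)
  moreover have "map (s_eta j) L = L"
    by (simp add: L_def s_eta_eta_bar)
  ultimately have sR: "s_eta j (DQ_power m j k) = c * b * hcomplete r (b # L)"
    by (simp add: R s_eta_hom s_eta_hcomplete a_def b_def s_eta_eta_bar)
  obtain H where H: "hcomplete r (b # L) - hcomplete r (a # L) = (b - a) * H"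
    and R_Suc: "DQ_power m (Suc j) k = - (c * a * b * H)"
  proof (cases r)
    case 0
    then have "DQ_power m (Suc j) k = 0"
      using True r_def assms by (simp add: DQ_power_def)
    with 0 show thesis by (intro that[of 0]) simp_all
  next
    case (Suc r')
    have sign: "(-1) ^ (Suc j - m) = - ((-1) ^ (j - m) :: mpoly)"
      using assms by (simp add: Suc_diff_le)
    have "Suc j - m < k" "k - Suc (Suc j - m) = r'"
      using Suc r_def assms by simp_all
    moreover have "map eta_bar (rev [m..<Suc (Suc j)]) = b # a # L"
      using assms by (simp add: a_def b_def L_def)
    moreover have "(\<Prod>l=m..Suc j. eta_bar l) = (\<Prod>l\<in>{m..<j}. eta_bar l) * a * b"
      using assms by (simp add: prod_eq prod.nat_ivl_Suc' a_def b_def)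
    ultimately have "DQ_power m (Suc j) k = - (c * a * b * hcomplete r' (b # a # L))"
      using True by (simp add: DQ_power_def sign c_def algebra_simps)
    with Suc show thesis
      by (intro that[of "hcomplete r' (b # a # L)"]) (simp_all only: hcomplete_Cons_diff)
  qed
  have Hb: "hcomplete r (b # L) = hcomplete r (a # L) + (b - a) * H"
    using H by (simp add: algebra_simps)
  have "a * (c * b * hcomplete r (b # L) - c * a * hcomplete r (a # L))
      = (a - b) * (- (c * a * b * H) - c * a * hcomplete r (a # L))"
    unfolding Hb by (simp add: algebra_simps)
  then show ?thesis
    unfolding DQ_maps_def sR unfolding R_Suc R a_def[symmetric] b_def[symmetric] .
qed


section \<open>A reduced path from w0 to the Coxeter element\<close>

(* In one-line notation path_perm n m j is  m, ..., j-1, j+1, ..., n, j, m-1, ..., 1. *)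
definition path_perm :: "nat \<Rightarrow> nat \<Rightarrow> nat \<Rightarrow> nat \<Rightarrow> nat" where
  "path_perm n m j = (\<lambda>x.
     if 1 \<le> x \<and> x \<le> n - m then (if x + m \<le> j then x + m - 1 else x + m)
     else if x = n - m + 1 then j
     else if n - m + 1 < x \<and> x \<le> n then n + 1 - x
     else x)"

lemma sref_apply: "sref i v = (if v = i then Suc i else if v = Suc i then i else v)"
  by (simp add: sref_def transpose_def)

lemma path_perm_Suc:
  assumes "1 \<le> m" "m \<le> j" "j < n"
  shows "path_perm n m (Suc j) = sref j \<circ> path_perm n m j"
proof
  fix x
  consider "1 \<le> x" "x \<le> n - m" | "x = n - m + 1" | "n - m + 1 < x" "x \<le> n" | "x = 0 \<or> n < x"
    by linarith
  then show "path_perm n m (Suc j) x = (sref j \<circ> path_perm n m j) x"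
    by cases (use assms in \<open>auto simp: path_perm_def sref_apply\<close>)
qed

lemma w0_eq_path_perm: "2 \<le> n \<Longrightarrow> w0 n = path_perm n (n - 1) (n - 1)"
proof
  fix x assume n: "2 \<le> n"
  consider "x = 0" | "x = 1" | "x = 2" | "2 < x" "x \<le> n" | "n < x"
    by linarith
  then show "w0 n x = path_perm n (n - 1) (n - 1) x"
    by cases (use n in \<open>simp_all add: path_perm_def w0_def\<close>)
qed

lemma path_perm_row_end:
  assumes "1 \<le> m" "m < n - 1"
  shows "path_perm n (Suc m) n = path_perm n m m"
proof
  fix x
  consider "x = 0" | "1 \<le> x" "x < n - m" | "x = n - m" | "x = n - m + 1" | "n - m + 1 < x" "x \<le> n"
    | "n < x"
    by linarith
  then show "path_perm n (Suc m) n x = path_perm n m m x"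
    by cases (use assms in \<open>auto simp: path_perm_def\<close>)
qed

lemma foldr_sref_apply:
  "foldr (\<lambda>i w. sref i \<circ> w) [a..<a + d] id x
     = (if a \<le> x \<and> x < a + d then x + 1 else if x = a + d then a else x)"
proof (induction d arbitrary: a)
  case 0
  show ?case by simp
next
  case (Suc d)
  have "[a..<a + Suc d] = a # [Suc a..<Suc a + d]"
    by (simp add: upt_conv_Cons)
  then show ?case
    using Suc[of "Suc a"] by (auto simp: sref_apply)
qed

lemma coxeter_eq_path_perm: "2 \<le> n \<Longrightarrow> coxeter n = path_perm n 1 1"
proof
  fix x assume n: "2 \<le> n"
  have coxeter: "coxeter n x = (if 1 \<le> x \<and> x < n then x + 1 else if x = n then 1 else x)"
    using foldr_sref_apply[of 1 "n - 1" x] n by (simp add: coxeter_def)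
  then show "coxeter n x = path_perm n 1 1 x"
    using n by (auto simp: path_perm_def)
qed

lemma w0_permutes: "w0 n permutes {1..n}"
proof (rule bij_imp_permutes)
  show "bij_betw (w0 n) {1..n} {1..n}"
    by (rule bij_betw_byWitness[where f' = "w0 n"]) (auto simp: w0_def)
qed (auto simp: w0_def)

lemma inv_len_sref_comp_less:
  assumes inj: "inj_on w {1..n}" and "p < q" "p \<in> {1..n}" "q \<in> {1..n}"
    and "w p = Suc i" "w q = i"
  shows "inv_len n (sref i \<circ> w) < inv_len n w"
proof -
  define A where "A = {(a, b). a \<in> {1..n} \<and> b \<in> {1..n} \<and> a < b \<and> w a > w b}"
  define B where
    "B = {(a, b). a \<in> {1..n} \<and> b \<in> {1..n} \<and> a < b \<and> sref i (w a) > sref i (w b)}"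
  have "B \<subseteq> A - {(p, q)}"
  proof
    fix ab assume "ab \<in> B"
    then obtain a b where ab: "ab = (a, b)" "a \<in> {1..n}" "b \<in> {1..n}" "a < b"
      "sref i (w a) > sref i (w b)"
      unfolding B_def by auto
    have "w a > w b"
    proof (rule ccontr)
      assume "\<not> w a > w b"
      with ab(5) have "w a = w q" "w b = w p"
        using assms(5,6) by (auto simp: sref_apply split: if_splits)
      then have "a = q" "b = p"
        using inj ab(2,3) assms(3,4) by (auto dest: inj_onD)
      with ab(4) \<open>p < q\<close> show False by simp
    qed
    moreover have "(a, b) \<noteq> (p, q)"
      using ab(5) assms(5,6) by (auto simp: sref_apply)
    ultimately show "ab \<in> A - {(p, q)}"
      using ab unfolding A_def by auto
  qed
  moreover have "(p, q) \<in> A"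
    using assms unfolding A_def by auto
  ultimately have "B \<subset> A"
    by auto
  moreover have "finite A"
    unfolding A_def by (rule finite_subset[of _ "{1..n} \<times> {1..n}"]) auto
  ultimately have "card B < card A"
    by (simp add: psubset_card_mono)
  then show ?thesis
    unfolding inv_len_def A_def B_def by simp
qed

lemma inv_len_path_perm_Suc_less:
  assumes "1 \<le> m" "m \<le> j" "j < n" "path_perm n m j permutes {1..n}"
  shows "inv_len n (sref j \<circ> path_perm n m j) < inv_len n (path_perm n m j)"
proof (rule inv_len_sref_comp_less[where p = "Suc j - m" and q = "n - m + 1"])
  show "inj_on (path_perm n m j) {1..n}"
    using assms(4) by (rule permutes_inj_on)
qed (use assms in \<open>auto simp: path_perm_def\<close>)


section \<open>The polynomials along the path\<close>

definition path_poly :: "nat \<Rightarrow> nat \<Rightarrow> nat \<Rightarrow> mpoly" where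
  "path_poly n m j =
     (\<Prod>i=n-m+1..n-1. psi n i) * (\<Sum>k=0..n-m. (-1) ^ k * F n (n - m) k * DQ_power m j k)"

lemma path_poly_Suc:
  assumes "1 \<le> m" "m \<le> j" "j < n"
  shows "DQ j (path_poly n m j) = path_poly n m (Suc j)"
proof -
  have "s_eta j (\<Prod>i=n-m+1..n-1. psi n i) = (\<Prod>i=n-m+1..n-1. psi n i)"
    using assms by (auto simp: s_eta_hom intro!: prod.cong s_eta_psi)
  moreover have "s_eta j ((-1) ^ k * F n (n - m) k) = (-1) ^ k * F n (n - m) k" for k
    by (simp add: s_eta_hom s_eta_F)
  ultimately have "DQ_maps j (path_poly n m j) (path_poly n m (Suc j))"
    unfolding path_poly_def
    by (intro DQ_maps_mult_invariant DQ_maps_sum DQ_maps_DQ_power assms(2))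
  then show ?thesis
    by (rule DQ_eqI)
qed

lemma path_poly_diag:
  assumes "1 \<le> m" "m \<le> n"
  shows "path_poly n m m = (\<Prod>i=n-m..n-1. psi n i)"
proof -
  have "(\<Prod>i=n-m..n-1. psi n i) = (\<Prod>i=Suc (n - m)..n-1. psi n i) * psi n (n - m)"
    using assms by (subst prod.atLeast_Suc_atMost) (simp_all add: mult.commute)
  moreover have "psi n (n - m) = (\<Sum>k=0..n-m. (-1) ^ k * F n (n - m) k * DQ_power m m k)"
    using assms by (simp add: psi_def DQ_power_diag eta_bar_def mult_ac)
  ultimately show ?thesis
    by (simp add: path_poly_def)
qed

lemma F_0: "F n i 0 = 1"
proof -
  have "{J. J \<subseteq> {1..i} \<and> card J = 0} = {{}}"
    by (auto dest: finite_subset[OF _ finite_atLeastAtMost])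
  then show ?thesis
    by (simp add: F_def)
qed

lemma path_poly_row_end:
  assumes "1 \<le> m" "m < n - 1"
  shows "path_poly n (Suc m) n = path_poly n m m"
proof -
  have "(\<Sum>k=0..n - Suc m. (-1) ^ k * F n (n - Suc m) k * DQ_power (Suc m) n k) = 1"
    using assms by (simp add: sum.atLeast_Suc_atMost DQ_power_0 DQ_power_vanish F_0)
  moreover have "n - Suc m + 1 = n - m"
    using assms by simp
  ultimately have "path_poly n (Suc m) n = (\<Prod>i=n-m..n-1. psi n i)"
    by (simp add: path_poly_def)
  also have "\<dots> = path_poly n m m"
    using assms by (simp add: path_poly_diag)
  finally show ?thesis .
qed

lemma path_poly_1_1:
  assumes "2 \<le> n"
  shows "path_poly n 1 1 = (\<Sum>j=0..n-1. (-1) ^ j * (1 - eta 1) ^ j * F n (n - 1) j)"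
proof -
  have "path_poly n 1 1 = psi n (n - 1)"
    using assms path_poly_diag[of 1 n] by simp
  also have "\<dots> = (\<Sum>j=0..n-1. (-1) ^ j * (1 - eta 1) ^ j * F n (n - 1) j)"
    using assms by (simp add: psi_def)
  finally show ?thesis .
qed


section \<open>Quantum double Grothendieck polynomials along the path\<close>

lemma is_QDG_descent:
  assumes "is_QDG n G" "w permutes {1..n}" "1 \<le> i" "i < n"
    and "inv_len n (sref i \<circ> w) < inv_len n w"
  shows "G (sref i \<circ> w) = DQ i (G w)"
proof -
  have "DQ i (G w) = (if inv_len n (sref i \<circ> w) < inv_len n w then G (sref i \<circ> w) else G w)"
    using assms(1-4) unfolding is_QDG_def by simp
  then show ?thesis
    using assms(5) by simp
qed

lemma QDG_path_row:
  assumes G: "is_QDG n G" and "1 \<le> m" "m \<le> j" "j \<le> n"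
    and "path_perm n m m permutes {1..n}" "G (path_perm n m m) = path_poly n m m"
  shows "path_perm n m j permutes {1..n} \<and> G (path_perm n m j) = path_poly n m j"
  using \<open>m \<le> j\<close> \<open>j \<le> n\<close>
proof (induction j rule: dec_induct)
  case base
  show ?case using assms(5,6) by simp
next
  case (step k)
  then have perm: "path_perm n m k permutes {1..n}" and val: "G (path_perm n m k) = path_poly n m k"
    by simp_all
  have Suc_eq: "path_perm n m (Suc k) = sref k \<circ> path_perm n m k"
    using assms(2) step by (intro path_perm_Suc) simp_all
  have perm_Suc: "path_perm n m (Suc k) permutes {1..n}"
    unfolding Suc_eq sref_def
    by (rule permutes_compose[OF perm permutes_swap_id]) (use assms(2) step in auto)
  have "G (path_perm n m (Suc k)) = DQ k (G (path_perm n m k))"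
    unfolding Suc_eq using assms(2) step
    by (intro is_QDG_descent[OF G perm] inv_len_path_perm_Suc_less[OF _ _ _ perm]) simp_all
  also have "\<dots> = path_poly n m (Suc k)"
    unfolding val using assms(2) step by (intro path_poly_Suc) simp_all
  finally show ?case
    using perm_Suc by (intro conjI)
qed

lemma QDG_path_diag:
  assumes G: "is_QDG n G" and "2 \<le> n" "1 \<le> m" "m \<le> n - 1"
  shows "path_perm n m m permutes {1..n} \<and> G (path_perm n m m) = path_poly n m m"
  using \<open>m \<le> n - 1\<close> \<open>1 \<le> m\<close>
proof (induction m rule: inc_induct)
  case base
  have "G (w0 n) = (\<Prod>i=1..n-1. psi n i)"
    using G by (simp add: is_QDG_def)
  then show ?case
    using assms(2) w0_permutes[of n] by (simp add: w0_eq_path_perm path_poly_diag)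
next
  case (step m)
  then have "path_perm n (Suc m) n permutes {1..n} \<and>
      G (path_perm n (Suc m) n) = path_poly n (Suc m) n"
    by (intro QDG_path_row[OF G]) simp_all
  with step show ?case
    by (simp add: path_perm_row_end path_poly_row_end)
qed

theorem corollary5p3:
  fixes n :: nat and G :: "(nat \<Rightarrow> nat) \<Rightarrow> mpoly"
  assumes "n \<ge> 2" and "is_QDG n G"
  shows "G (coxeter n) = (\<Sum>j=0..n-1. (-1)^j * (1 - eta 1)^j * F n (n-1) j)"
proof -
  have "G (coxeter n) = G (path_perm n 1 1)"
    using assms(1) by (simp only: coxeter_eq_path_perm)
  also have "\<dots> = path_poly n 1 1"
    using QDG_path_diag[OF assms(2,1), of 1] assms(1) by simp
  also have "\<dots> = (\<Sum>j=0..n-1. (-1)^j * (1 - eta 1)^j * F n (n-1) j)"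
    using assms(1) by (rule path_poly_1_1)
  finally show ?thesis .
qed

end
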